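(* Let $(T,f,\sqsubseteq_L)$ be a leaf-ordered merge tree. Then $\mathcal L(\mathcal T((T,f,\sqsubseteq_L)))=(T,f,\sqsubseteq_L)$.
   Context: A merge tree $(T,f)$: a finite rooted tree $T$ identified with its topological realisation, with a continuous $f\colon T\to\mathbb{R}\cup\{\infty\}$ strictly increasing towards the root, $f(v)=\infty$ iff $v$ is the root; lowest leaf at height $0$; $L(T)$ is the set of leaves. $T_x$ is the subtree of descendants of $x$; $\mathrm{lca}$ the lowest common ancestor; $\mathrm{anc}_h(x)$ the unique ancestor of $x$ at height $h\ge f(x)$; $\mathbb{L}_h=\{x:f(x)=h\}$. A layer-order is a family $(\le_h)_{h\ge0}$ of total orders on the $\mathbb{L}_h$ that is consistent ($h_1\le h_2$ and $x_1\le_{h_1}x_2$ imply $\mathrm{anc}_{h_2}(x_1)\le_{h_2}\mathrm{anc}_{h_2}(x_2)$); $(T,f,(\le_h))$ is an ordered merge tree. A leaf-order is a total order $\sqsubseteq_L$ on $L(T)$ such that $u_1\sqsubseteq_L u\sqsubseteq_L u_2$ implies $u\in T_{\mathrm{lca}(u_1,u_2)}$; $(T,f,\sqsubseteq_L)$ is a leaf-ordered merge tree. $\mathcal L((T,f,(\le_h)))=(T,f,\sqsubseteq_L)$ with $u_1\sqsubseteq_L u_2$ iff $\mathrm{anc}_h(u_1)\le_h\mathrm{anc}_h(u_2)$ for $h=\max(f(u_1),f(u_2))$. $\mathcal T((T,f,\sqsubseteq_L))=(T,f,(\le_h))$ with $x_1\le_h x_2$ (for $x_1,x_2\in\mathbb{L}_h$)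 iff $x_1=x_2$ or $u_1\sqsubseteq_L u_2$ for all leaves $u_1\in T_{x_1}$, $u_2\in T_{x_2}$. *)

theory Defs
  imports "HOL-Library.Extended_Real"
begin

text \<open>
  The topological realisation is parametrised by
  height: a point is a pair (v,h) with v a non-root vertex and
  fv v <= h < fv (parent v) (a point on the edge from v up to its parent,
  the vertex v itself being (v, fv v)), or the root point (r, infinity).
  The function f on the realisation is the second component.
\<close>

definition mt_leafv :: "'v set \<Rightarrow> 'v \<Rightarrow> ('v \<Rightarrow> 'v) \<Rightarrow> 'v set" where
  "mt_leafv V r parent = {v \<in> V - {r}. \<forall>w \<in> V - {r}. parent w \<noteq> v}"

definition merge_tree :: "'v set \<Rightarrow> 'v \<Rightarrow> ('v \<Rightarrow> 'v) \<Rightarrow> ('v \<Rightarrow> ereal) \<Rightarrow> bool" where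
  "merge_tree V r parent fv \<longleftrightarrow>
     finite V \<and> r \<in> V \<and> parent r = r \<and>
     (\<forall>v \<in> V. parent v \<in> V) \<and>
     (\<forall>v \<in> V. \<exists>n. (parent ^^ n) v = r) \<and>
     (\<forall>v \<in> V. fv v = \<infinity> \<longleftrightarrow> v = r) \<and>
     (\<forall>v \<in> V - {r}. fv v < fv (parent v)) \<and>
     (\<forall>v \<in> mt_leafv V r parent. 0 \<le> fv v) \<and>
     (\<exists>v \<in> mt_leafv V r parent. fv v = 0)"

definition mt_points :: "'v set \<Rightarrow> 'v \<Rightarrow> ('v \<Rightarrow> 'v) \<Rightarrow> ('v \<Rightarrow> ereal) \<Rightarrow> ('v \<times> ereal) set" where
  "mt_points V r parent fv =
     {(v, h). v \<in> V \<and> (if v = r then h = \<infinity> else fv v \<le> h \<and> h < fv (parent v))}"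

definition mt_desc :: "'v set \<Rightarrow> 'v \<Rightarrow> ('v \<Rightarrow> 'v) \<Rightarrow> ('v \<Rightarrow> ereal) \<Rightarrow> 'v \<times> ereal \<Rightarrow> 'v \<times> ereal \<Rightarrow> bool" where
  "mt_desc V r parent fv p q \<longleftrightarrow>
     p \<in> mt_points V r parent fv \<and> q \<in> mt_points V r parent fv \<and>
     snd p \<le> snd q \<and> (\<exists>n. fst q = (parent ^^ n) (fst p))"

definition mt_subtree :: "'v set \<Rightarrow> 'v \<Rightarrow> ('v \<Rightarrow> 'v) \<Rightarrow> ('v \<Rightarrow> ereal) \<Rightarrow> 'v \<times> ereal \<Rightarrow> ('v \<times> ereal) set" where
  "mt_subtree V r parent fv x = {p. mt_desc V r parent fv p x}"

definition mt_leaves :: "'v set \<Rightarrow> 'v \<Rightarrow> ('v \<Rightarrow> 'v) \<Rightarrow> ('v \<Rightarrow> ereal) \<Rightarrow> ('v \<times> ereal) set" where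
  "mt_leaves V r parent fv = (\<lambda>v. (v, fv v)) ` mt_leafv V r parent"

definition mt_lca :: "'v set \<Rightarrow> 'v \<Rightarrow> ('v \<Rightarrow> 'v) \<Rightarrow> ('v \<Rightarrow> ereal) \<Rightarrow> 'v \<times> ereal \<Rightarrow> 'v \<times> ereal \<Rightarrow> 'v \<times> ereal" where
  "mt_lca V r parent fv x y =
     (THE z. mt_desc V r parent fv x z \<and> mt_desc V r parent fv y z \<and>
        (\<forall>w. mt_desc V r parent fv x w \<and> mt_desc V r parent fv y w \<longrightarrow> mt_desc V r parent fv z w))"

definition mt_anc :: "'v set \<Rightarrow> 'v \<Rightarrow> ('v \<Rightarrow> 'v) \<Rightarrow> ('v \<Rightarrow> ereal) \<Rightarrow> ereal \<Rightarrow> 'v \<times> ereal \<Rightarrow> 'v \<times> ereal" where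
  "mt_anc V r parent fv h x = (THE y. mt_desc V r parent fv x y \<and> snd y = h)"

definition mt_layer :: "'v set \<Rightarrow> 'v \<Rightarrow> ('v \<Rightarrow> 'v) \<Rightarrow> ('v \<Rightarrow> ereal) \<Rightarrow> real \<Rightarrow> ('v \<times> ereal) set" where
  "mt_layer V r parent fv h = {x \<in> mt_points V r parent fv. snd x = ereal h}"

definition leaf_order :: "'v set \<Rightarrow> 'v \<Rightarrow> ('v \<Rightarrow> 'v) \<Rightarrow> ('v \<Rightarrow> ereal) \<Rightarrow> ('v \<times> ereal) rel \<Rightarrow> bool" where
  "leaf_order V r parent fv R \<longleftrightarrow>
     linear_order_on (mt_leaves V r parent fv) R \<and>
     (\<forall>u1 u u2. (u1, u) \<in> R \<and> (u, u2) \<in> R \<longrightarrow>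
        u \<in> mt_subtree V r parent fv (mt_lca V r parent fv u1 u2))"

definition to_layer_order :: "'v set \<Rightarrow> 'v \<Rightarrow> ('v \<Rightarrow> 'v) \<Rightarrow> ('v \<Rightarrow> ereal) \<Rightarrow> ('v \<times> ereal) rel \<Rightarrow> real \<Rightarrow> ('v \<times> ereal) rel" where
  "to_layer_order V r parent fv R h =
     {(x1, x2). x1 \<in> mt_layer V r parent fv h \<and> x2 \<in> mt_layer V r parent fv h \<and>
        (x1 = x2 \<or>
         (\<forall>u1 \<in> mt_leaves V r parent fv \<inter> mt_subtree V r parent fv x1.
          \<forall>u2 \<in> mt_leaves V r parent fv \<inter> mt_subtree V r parent fv x2. (u1, u2) \<in> R))}"

definition to_leaf_order :: "'v set \<Rightarrow> 'v \<Rightarrow> ('v \<Rightarrow> 'v) \<Rightarrow> ('v \<Rightarrow> ereal) \<Rightarrow> (real \<Rightarrow> ('v \<times> ereal) rel) \<Rightarrow> ('v \<times> ereal) rel" where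
  "to_leaf_order V r parent fv Lo =
     {(u1, u2). u1 \<in> mt_leaves V r parent fv \<and> u2 \<in> mt_leaves V r parent fv \<and>
        (let h = real_of_ereal (max (snd u1) (snd u2)) in
          (mt_anc V r parent fv (ereal h) u1, mt_anc V r parent fv (ereal h) u2) \<in> Lo h)}"

end

theory Submission
  imports Defs
begin

text \<open>
  Let \<open>u\<^sub>1, u\<^sub>2\<close> be leaves, \<open>h\<close> the larger of their heights and \<open>a\<^sub>i = anc\<^sub>h(u\<^sub>i)\<close>.
  If \<open>a\<^sub>1 = a\<^sub>2\<close>, then the higher leaf is this common ancestor and the other leaf lies
  below it, so \<open>u\<^sub>1 = u\<^sub>2\<close> by minimality of leaves.  If \<open>a\<^sub>1 \<noteq> a\<^sub>2\<close>, their subtrees are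
  disjoint, and the lca-interval condition makes the leaves below each \<open>a\<^sub>i\<close> an interval
  of the leaf-order; hence \<open>u\<^sub>1 \<sqsubseteq> u\<^sub>2\<close> holds iff every leaf below \<open>a\<^sub>1\<close> precedes every
  leaf below \<open>a\<^sub>2\<close>, which is exactly \<open>a\<^sub>1 \<le>\<^sub>h a\<^sub>2\<close>.
\<close>

locale merge_tree_struct =
  fixes V :: "'v set" and r :: 'v and parent :: "'v \<Rightarrow> 'v" and fv :: "'v \<Rightarrow> ereal"
  assumes merge_tree: "merge_tree V r parent fv"
begin

abbreviation "points \<equiv> mt_points V r parent fv"
abbreviation "desc \<equiv> mt_desc V r parent fv"
abbreviation "leaves \<equiv> mt_leaves V r parent fv"
abbreviation "subtree \<equiv> mt_subtree V r parent fv"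
abbreviation "lca \<equiv> mt_lca V r parent fv"
abbreviation "anc \<equiv> mt_anc V r parent fv"

lemma
  shows finite_V: "finite V"
    and root_in_V: "r \<in> V"
    and parent_root: "parent r = r"
    and parent_in_V: "v \<in> V \<Longrightarrow> parent v \<in> V"
    and reaches_root: "v \<in> V \<Longrightarrow> \<exists>n. (parent ^^ n) v = r"
    and fv_eq_infinity_iff: "v \<in> V \<Longrightarrow> fv v = \<infinity> \<longleftrightarrow> v = r"
    and fv_less_fv_parent: "v \<in> V \<Longrightarrow> v \<noteq> r \<Longrightarrow> fv v < fv (parent v)"
    and leafv_fv_nonneg: "v \<in> mt_leafv V r parent \<Longrightarrow> 0 \<le> fv v"
  using merge_tree unfolding merge_tree_def by auto

lemma fv_root: "fv r = \<infinity>"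
  using fv_eq_infinity_iff root_in_V by blast

lemma funpow_parent_in_V: "x \<in> V \<Longrightarrow> (parent ^^ n) x \<in> V"
  by (induction n) (auto simp: parent_in_V)

lemma funpow_parent_root: "(parent ^^ n) r = r"
  by (induction n) (auto simp: parent_root)

lemma fv_le_fv_funpow_parent: "x \<in> V \<Longrightarrow> fv x \<le> fv ((parent ^^ n) x)"
proof (induction n)
  case (Suc n)
  have "fv ((parent ^^ n) x) \<le> fv (parent ((parent ^^ n) x))"
  proof (cases "(parent ^^ n) x = r")
    case False
    then show ?thesis using fv_less_fv_parent funpow_parent_in_V Suc.prems by (simp add: less_imp_le)
  qed (simp add: parent_root)
  with Suc show ?case by simp
qed simp

lemma fv_parent_le_fv_funpow_parent:
  assumes "x \<in> V" "0 < n"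
  shows "fv (parent x) \<le> fv ((parent ^^ n) x)"
proof -
  obtain m where "n = Suc m" using assms(2) gr0_implies_Suc by blast
  then have "(parent ^^ n) x = (parent ^^ m) (parent x)"
    by (simp add: funpow_Suc_right del: funpow.simps)
  then show ?thesis using fv_le_fv_funpow_parent[OF parent_in_V[OF assms(1)]] by simp
qed

lemma funpow_parent_antisym:
  assumes "y = (parent ^^ a) x" "x = (parent ^^ b) y" "x \<in> V"
  shows "x = y"
proof (rule ccontr)
  assume "x \<noteq> y"
  then have "x \<noteq> r" using assms(1) funpow_parent_root by metis
  have "0 < a" using \<open>x \<noteq> y\<close> assms(1) by (cases a) auto
  have "fv x < fv (parent x)" using fv_less_fv_parent assms(3) \<open>x \<noteq> r\<close> by blast
  also have "\<dots> \<le> fv y" using fv_parent_le_fv_funpow_parent[OF assms(3) \<open>0 < a\<close>] assms(1) by simp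
  also have "\<dots> \<le> fv x"
    using fv_le_fv_funpow_parent[OF funpow_parent_in_V[OF assms(3)]] assms by metis
  finally show False by simp
qed

lemma exists_edge_at_height:
  assumes "x \<in> V" "fv x \<le> ereal h"
  shows "\<exists>n. fv ((parent ^^ n) x) \<le> ereal h \<and> ereal h < fv (parent ((parent ^^ n) x))"
proof -
  obtain k where "(parent ^^ k) x = r" using reaches_root assms(1) by blast
  with assms show ?thesis
  proof (induction k arbitrary: x)
    case 0
    then show ?case by (simp add: fv_root)
  next
    case (Suc k)
    show ?case
    proof (cases "ereal h < fv (parent x)")
      case True
      then show ?thesis using Suc.prems by (metis funpow_0)
    next
      case False
      have "(parent ^^ k) (parent x) = r"
        using Suc.prems by (simp add: funpow_Suc_right del: funpow.simps)
      moreover have "fv (parent x) \<le> ereal h" using False by simp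
      ultimately obtain n where "fv ((parent ^^ n) (parent x)) \<le> ereal h"
          "ereal h < fv (parent ((parent ^^ n) (parent x)))"
        using Suc.IH parent_in_V Suc.prems(1) by blast
      then show ?thesis by (metis funpow_Suc_right comp_apply)
    qed
  qed
qed

lemma mem_points_iff:
  "(v, h) \<in> points \<longleftrightarrow> v \<in> V \<and> (if v = r then h = \<infinity> else fv v \<le> h \<and> h < fv (parent v))"
  by (simp add: mt_points_def)

lemma fv_le_height: "(v, h) \<in> points \<Longrightarrow> fv v \<le> h"
  by (auto simp: mem_points_iff split: if_splits)

lemma points_vertex_in_V: "p \<in> points \<Longrightarrow> fst p \<in> V"
  by (cases p) (simp add: mem_points_iff)

text \<open>
  Two points over the same path to the root are ordered by their vertices as they are
  by their heights, since the height intervals of distinct edges of a path do not overlap.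
\<close>
lemma path_points_ordered:
  assumes "x \<in> V" "(w\<^sub>1, k\<^sub>1) \<in> points" "(w\<^sub>2, k\<^sub>2) \<in> points"
    and "w\<^sub>1 = (parent ^^ n\<^sub>1) x" "w\<^sub>2 = (parent ^^ n\<^sub>2) x" "k\<^sub>1 \<le> k\<^sub>2"
  shows "\<exists>n. w\<^sub>2 = (parent ^^ n) w\<^sub>1"
proof (cases "n\<^sub>1 \<le> n\<^sub>2")
  case True
  then have "w\<^sub>2 = (parent ^^ (n\<^sub>2 - n\<^sub>1)) w\<^sub>1"
    using assms(4,5) by (simp flip: funpow_add[unfolded comp_def, THEN fun_cong])
  then show ?thesis by blast
next
  case False
  then have w\<^sub>1: "w\<^sub>1 = (parent ^^ (n\<^sub>1 - n\<^sub>2)) w\<^sub>2"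
    using assms(4,5) by (simp flip: funpow_add[unfolded comp_def, THEN fun_cong])
  show ?thesis
  proof (cases "w\<^sub>2 = r")
    case True
    then show ?thesis using w\<^sub>1 funpow_parent_root by (metis funpow_0)
  next
    case False
    have "k\<^sub>2 < fv (parent w\<^sub>2)" using assms(3) False by (simp add: mem_points_iff)
    also have "\<dots> \<le> fv w\<^sub>1"
      using fv_parent_le_fv_funpow_parent[OF funpow_parent_in_V[OF assms(1)], of "n\<^sub>1 - n\<^sub>2"]
        w\<^sub>1 \<open>\<not> n\<^sub>1 \<le> n\<^sub>2\<close> assms(5) by simp
    also have "\<dots> \<le> k\<^sub>1" using fv_le_height assms(2) by blast
    finally show ?thesis using assms(6) by simp
  qed
qed

lemma desc_points: "desc p q \<Longrightarrow> p \<in> points \<and> q \<in> points"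
  by (simp add: mt_desc_def)

lemma desc_height_le: "desc p q \<Longrightarrow> snd p \<le> snd q"
  by (simp add: mt_desc_def)

lemma desc_refl: "p \<in> points \<Longrightarrow> desc p p"
  unfolding mt_desc_def by (metis funpow_0 order_refl)

lemma desc_trans:
  assumes "desc p q" "desc q s"
  shows "desc p s"
proof -
  obtain n m where "fst q = (parent ^^ n) (fst p)" "fst s = (parent ^^ m) (fst q)"
    using assms unfolding mt_desc_def by blast
  then have "fst s = (parent ^^ (m + n)) (fst p)" by (simp add: funpow_add)
  then show ?thesis using assms unfolding mt_desc_def by (meson order_trans)
qed

lemma desc_linear:
  assumes "desc p z\<^sub>1" "desc p z\<^sub>2" "snd z\<^sub>1 \<le> snd z\<^sub>2"
  shows "desc z\<^sub>1 z\<^sub>2"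
proof -
  obtain n\<^sub>1 n\<^sub>2 where "fst z\<^sub>1 = (parent ^^ n\<^sub>1) (fst p)" "fst z\<^sub>2 = (parent ^^ n\<^sub>2) (fst p)"
    using assms unfolding mt_desc_def by blast
  moreover have "(fst z\<^sub>1, snd z\<^sub>1) \<in> points" "(fst z\<^sub>2, snd z\<^sub>2) \<in> points"
    using assms desc_points by auto
  ultimately obtain n where "fst z\<^sub>2 = (parent ^^ n) (fst z\<^sub>1)"
    using path_points_ordered assms(1,3) desc_points points_vertex_in_V by blast
  then show ?thesis using assms desc_points unfolding mt_desc_def by blast
qed

lemma desc_same_height_eq:
  assumes "desc p z\<^sub>1" "desc p z\<^sub>2" "snd z\<^sub>1 = snd z\<^sub>2"
  shows "z\<^sub>1 = z\<^sub>2"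
proof -
  have "desc z\<^sub>1 z\<^sub>2" "desc z\<^sub>2 z\<^sub>1"
    using desc_linear[OF assms(1,2)] desc_linear[OF assms(2,1)] assms(3) by simp_all
  then obtain a b where "fst z\<^sub>2 = (parent ^^ a) (fst z\<^sub>1)" "fst z\<^sub>1 = (parent ^^ b) (fst z\<^sub>2)"
    unfolding mt_desc_def by blast
  then have "fst z\<^sub>1 = fst z\<^sub>2"
    using funpow_parent_antisym assms(1) desc_points points_vertex_in_V by blast
  then show ?thesis using assms(3) by (simp add: prod_eq_iff)
qed

text \<open>
  The lowest common ancestor sits on the vertex \<open>w\<close> of least height among the vertices
  carrying common ancestors, at the lowest height on that edge above both points.
\<close>
lemma lca_exists:
  assumes p\<^sub>1: "p\<^sub>1 \<in> points" and p\<^sub>2: "p\<^sub>2 \<in> points"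
  shows "\<exists>z. desc p\<^sub>1 z \<and> desc p\<^sub>2 z \<and> (\<forall>w. desc p\<^sub>1 w \<and> desc p\<^sub>2 w \<longrightarrow> desc z w)"
proof -
  define S where "S = {z. desc p\<^sub>1 z \<and> desc p\<^sub>2 z}"
  have "desc p (r, \<infinity>)" if p: "p \<in> points" for p
  proof -
    obtain n where "(parent ^^ n) (fst p) = r"
      using reaches_root points_vertex_in_V p by blast
    then show ?thesis using p root_in_V unfolding mt_desc_def by (auto simp: mem_points_iff)
  qed
  then have "(r, \<infinity>) \<in> S" using p\<^sub>1 p\<^sub>2 by (simp add: S_def)
  define F where "F = fst ` S"
  have "F \<subseteq> V"
  proof
    fix v assume "v \<in> F"
    then obtain k where "desc p\<^sub>1 (v, k)" unfolding F_def S_def by force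
    then show "v \<in> V" using desc_points points_vertex_in_V by fastforce
  qed
  then have "finite (fv ` F)" using finite_V finite_subset by blast
  moreover have "fv ` F \<noteq> {}" using \<open>(r, \<infinity>) \<in> S\<close> unfolding F_def by blast
  ultimately obtain w where "w \<in> F" "fv w = Min (fv ` F)"
    using Min_in by (metis imageE)
  then have w_min: "fv w \<le> fv w'" if "w' \<in> F" for w'
    using Min_le[OF \<open>finite (fv ` F)\<close>] that by (metis image_eqI)
  obtain k where "(w, k) \<in> S" using \<open>w \<in> F\<close> unfolding F_def by (metis imageE prod.collapse)
  then have d\<^sub>1: "desc p\<^sub>1 (w, k)" and d\<^sub>2: "desc p\<^sub>2 (w, k)" unfolding S_def by simp_all
  define z where "z = (w, max (fv w) (max (snd p\<^sub>1) (snd p\<^sub>2)))"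
  have "snd p\<^sub>1 \<le> k" "snd p\<^sub>2 \<le> k" "(w, k) \<in> points"
    using desc_height_le[OF d\<^sub>1] desc_height_le[OF d\<^sub>2] desc_points[OF d\<^sub>1] by simp_all
  have "z \<in> points"
  proof (cases "w = r")
    case True
    then show ?thesis using root_in_V by (simp add: z_def mem_points_iff fv_root)
  next
    case False
    then have "fv w \<le> k" "k < fv (parent w)" "w \<in> V"
      using \<open>(w, k) \<in> points\<close> by (simp_all add: mem_points_iff)
    then show ?thesis using False \<open>snd p\<^sub>1 \<le> k\<close> \<open>snd p\<^sub>2 \<le> k\<close>
      by (simp add: z_def mem_points_iff order.strict_trans1)
  qed
  have "desc p\<^sub>1 z" "desc p\<^sub>2 z"
    using d\<^sub>1 d\<^sub>2 p\<^sub>1 p\<^sub>2 \<open>z \<in> points\<close> unfolding mt_desc_def z_def by (simp_all add: le_max_iff_disj)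
  moreover have "desc z s" if "desc p\<^sub>1 s" "desc p\<^sub>2 s" for s
  proof -
    have "fst s \<in> F" using that by (simp add: F_def S_def)
    then have "fv w \<le> fv (fst s)" by (rule w_min)
    also have "\<dots> \<le> snd s" using fv_le_height that desc_points by (metis prod.collapse)
    finally have "snd z \<le> snd s" using that desc_height_le by (simp add: z_def)
    then show ?thesis using desc_linear \<open>desc p\<^sub>1 z\<close> that(1) by blast
  qed
  ultimately show ?thesis by blast
qed

lemma lca_least:
  assumes "desc p\<^sub>1 w" "desc p\<^sub>2 w"
  shows "desc (lca p\<^sub>1 p\<^sub>2) w"
proof -
  have "\<exists>!z. desc p\<^sub>1 z \<and> desc p\<^sub>2 z \<and> (\<forall>w. desc p\<^sub>1 w \<and> desc p\<^sub>2 w \<longrightarrow> desc z w)"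
  proof (rule ex_ex1I)
    show "\<exists>z. desc p\<^sub>1 z \<and> desc p\<^sub>2 z \<and> (\<forall>w. desc p\<^sub>1 w \<and> desc p\<^sub>2 w \<longrightarrow> desc z w)"
      using lca_exists desc_points[OF assms(1)] desc_points[OF assms(2)] by blast
  next
    fix z y
    assume z: "desc p\<^sub>1 z \<and> desc p\<^sub>2 z \<and> (\<forall>w. desc p\<^sub>1 w \<and> desc p\<^sub>2 w \<longrightarrow> desc z w)"
      and y: "desc p\<^sub>1 y \<and> desc p\<^sub>2 y \<and> (\<forall>w. desc p\<^sub>1 w \<and> desc p\<^sub>2 w \<longrightarrow> desc y w)"
    then have "desc z y" "desc y z" by blast+
    then have "snd z = snd y" using desc_height_le by (blast intro: antisym)
    then show "z = y" using desc_same_height_eq z y by blast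
  qed
  then have "desc p\<^sub>1 (lca p\<^sub>1 p\<^sub>2) \<and> desc p\<^sub>2 (lca p\<^sub>1 p\<^sub>2) \<and>
      (\<forall>w. desc p\<^sub>1 w \<and> desc p\<^sub>2 w \<longrightarrow> desc (lca p\<^sub>1 p\<^sub>2) w)"
    unfolding mt_lca_def by (rule theI')
  then show ?thesis using assms by blast
qed

lemma leaves_subset_points: "leaves \<subseteq> points"
  using fv_less_fv_parent by (auto simp: mt_leaves_def mem_points_iff mt_leafv_def)

lemma leaf_height_finite: "u \<in> leaves \<Longrightarrow> \<bar>snd u\<bar> \<noteq> \<infinity>"
  using fv_eq_infinity_iff leafv_fv_nonneg by (fastforce simp: mt_leaves_def mt_leafv_def)

lemma desc_leaf_eq:
  assumes "u \<in> leaves" "desc p u"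
  shows "p = u"
proof -
  obtain v where v: "v \<in> mt_leafv V r parent" "u = (v, fv v)"
    using assms(1) by (auto simp: mt_leaves_def)
  obtain w k where p: "p = (w, k)" by fastforce
  obtain n where n: "v = (parent ^^ n) w" and "k \<le> fv v" "(w, k) \<in> points"
    using assms(2) p v(2) unfolding mt_desc_def by auto
  show ?thesis
  proof (cases n)
    case 0
    then show ?thesis using n p v(2) fv_le_height \<open>k \<le> fv v\<close> \<open>(w, k) \<in> points\<close> by fastforce
  next
    case (Suc m)
    then have "parent ((parent ^^ m) w) = v" using n by simp
    moreover have "(parent ^^ m) w \<in> V"
      using funpow_parent_in_V points_vertex_in_V \<open>(w, k) \<in> points\<close> by fastforce
    ultimately show ?thesis using v(1) parent_root unfolding mt_leafv_def by force
  qed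
qed

lemma desc_anc:
  assumes "p \<in> points" "snd p \<le> ereal h"
  shows "desc p (anc (ereal h) p) \<and> snd (anc (ereal h) p) = ereal h"
proof -
  have "fv (fst p) \<le> ereal h" using assms fv_le_height by (metis order_trans prod.collapse)
  then obtain n where n: "fv ((parent ^^ n) (fst p)) \<le> ereal h"
      "ereal h < fv (parent ((parent ^^ n) (fst p)))"
    using exists_edge_at_height assms(1) points_vertex_in_V by blast
  have "(parent ^^ n) (fst p) \<noteq> r" using n parent_root by force
  then have "((parent ^^ n) (fst p), ereal h) \<in> points"
    using n funpow_parent_in_V points_vertex_in_V assms(1) by (simp add: mem_points_iff)
  then have "desc p ((parent ^^ n) (fst p), ereal h)"
    using assms unfolding mt_desc_def by auto
  then have "\<exists>!y. desc p y \<and> snd y = ereal h"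
    using desc_same_height_eq by (metis snd_conv)
  then show ?thesis unfolding mt_anc_def by (rule theI')
qed

lemma eq_if_desc_at_max_height:
  assumes "u\<^sub>1 \<in> leaves" "u\<^sub>2 \<in> leaves" "desc u\<^sub>1 a" "desc u\<^sub>2 a"
    and "snd a = max (snd u\<^sub>1) (snd u\<^sub>2)"
  shows "u\<^sub>1 = u\<^sub>2"
proof -
  have "desc u u'" if "u' \<in> leaves" "desc u a" "desc u' a" "snd a = snd u'" for u u'
  proof -
    have "a = u'"
      using desc_same_height_eq[OF that(3) desc_refl] that(1,4) leaves_subset_points by blast
    with that(2) show ?thesis by simp
  qed
  then have "desc u\<^sub>1 u\<^sub>2 \<or> desc u\<^sub>2 u\<^sub>1"
    using assms by (cases "snd u\<^sub>1 \<le> snd u\<^sub>2") (simp_all add: max_def)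
  then show ?thesis using desc_leaf_eq assms(1,2) by metis
qed

context
  fixes R :: "('v \<times> ereal) rel"
  assumes leaf_order: "leaf_order V r parent fv R"
begin

lemma leaf_order_linear: "linear_order_on leaves R"
  using leaf_order by (simp add: leaf_order_def)

lemma leaf_order_subset: "R \<subseteq> leaves \<times> leaves"
  using leaf_order_linear unfolding linear_order_on_def partial_order_on_def preorder_on_def by blast

lemma leaf_order_refl: "u \<in> leaves \<Longrightarrow> (u, u) \<in> R"
  using leaf_order_linear
  unfolding linear_order_on_def partial_order_on_def preorder_on_def refl_on_def by blast

lemma leaf_order_total: "u \<in> leaves \<Longrightarrow> u' \<in> leaves \<Longrightarrow> (u, u') \<notin> R \<Longrightarrow> (u', u) \<in> R"
  using leaf_order_linear leaf_order_refl unfolding linear_order_on_def total_on_def by metis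

lemma leaf_order_interval:
  assumes "desc l a" "desc l' a" "(l, m) \<in> R" "(m, l') \<in> R"
  shows "desc m a"
proof -
  have "m \<in> subtree (lca l l')" using leaf_order assms(3,4) unfolding leaf_order_def by blast
  then show ?thesis using desc_trans lca_least assms(1,2) by (auto simp: mt_subtree_def)
qed

lemma leaf_order_separates_subtrees:
  assumes "a\<^sub>1 \<noteq> a\<^sub>2" "snd a\<^sub>1 = snd a\<^sub>2"
    and "u\<^sub>1 \<in> leaves" "desc u\<^sub>1 a\<^sub>1" "desc u\<^sub>2 a\<^sub>2" "(u\<^sub>1, u\<^sub>2) \<in> R"
    and "l\<^sub>1 \<in> leaves" "desc l\<^sub>1 a\<^sub>1" "l\<^sub>2 \<in> leaves" "desc l\<^sub>2 a\<^sub>2"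
  shows "(l\<^sub>1, l\<^sub>2) \<in> R"
proof (rule ccontr)
  have not_below_both: "\<not> (desc x a\<^sub>1 \<and> desc x a\<^sub>2)" for x
    using desc_same_height_eq[of x a\<^sub>1 a\<^sub>2] assms(1,2) by blast
  assume "(l\<^sub>1, l\<^sub>2) \<notin> R"
  then have l\<^sub>2\<^sub>1: "(l\<^sub>2, l\<^sub>1) \<in> R" using leaf_order_total assms(7,9) by blast
  show False
  proof (cases "(u\<^sub>1, l\<^sub>2) \<in> R")
    case True
    have "desc l\<^sub>2 a\<^sub>1" by (rule leaf_order_interval[OF assms(4,8) True l\<^sub>2\<^sub>1])
    then show False using not_below_both assms(10) by blast
  next
    case False
    then have "(l\<^sub>2, u\<^sub>1) \<in> R" using leaf_order_total assms(3,9) by blast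
    then have "desc u\<^sub>1 a\<^sub>2" using leaf_order_interval assms(5,6,10) by blast
    then show False using not_below_both assms(4) by blast
  qed
qed

lemma mem_to_leaf_order_to_layer_order_iff:
  assumes "u\<^sub>1 \<in> leaves" "u\<^sub>2 \<in> leaves"
  shows "(u\<^sub>1, u\<^sub>2) \<in> to_leaf_order V r parent fv (to_layer_order V r parent fv R) \<longleftrightarrow>
    (u\<^sub>1, u\<^sub>2) \<in> R"
proof -
  define h where "h = real_of_ereal (max (snd u\<^sub>1) (snd u\<^sub>2))"
  have h: "ereal h = max (snd u\<^sub>1) (snd u\<^sub>2)"
    unfolding h_def using leaf_height_finite assms by (simp add: max_def ereal_real')
  define a\<^sub>1 where "a\<^sub>1 = anc (ereal h) u\<^sub>1"
  define a\<^sub>2 where "a\<^sub>2 = anc (ereal h) u\<^sub>2"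
  have "snd u\<^sub>1 \<le> ereal h" "snd u\<^sub>2 \<le> ereal h" using h by simp_all
  then have a\<^sub>1: "desc u\<^sub>1 a\<^sub>1" "snd a\<^sub>1 = ereal h" and a\<^sub>2: "desc u\<^sub>2 a\<^sub>2" "snd a\<^sub>2 = ereal h"
    using desc_anc assms leaves_subset_points unfolding a\<^sub>1_def a\<^sub>2_def by blast+
  have layer: "a\<^sub>1 \<in> mt_layer V r parent fv h" "a\<^sub>2 \<in> mt_layer V r parent fv h"
    using a\<^sub>1 a\<^sub>2 desc_points unfolding mt_layer_def by auto
  have "(u\<^sub>1, u\<^sub>2) \<in> to_leaf_order V r parent fv (to_layer_order V r parent fv R) \<longleftrightarrow>
      (a\<^sub>1, a\<^sub>2) \<in> to_layer_order V r parent fv R h"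
    using assms unfolding to_leaf_order_def Let_def a\<^sub>1_def a\<^sub>2_def h_def by simp
  also have "\<dots> \<longleftrightarrow>
      a\<^sub>1 = a\<^sub>2 \<or> (\<forall>l\<^sub>1 \<in> leaves \<inter> subtree a\<^sub>1. \<forall>l\<^sub>2 \<in> leaves \<inter> subtree a\<^sub>2. (l\<^sub>1, l\<^sub>2) \<in> R)"
    using layer unfolding to_layer_order_def by simp
  also have "\<dots> \<longleftrightarrow> (u\<^sub>1, u\<^sub>2) \<in> R"
  proof (cases "a\<^sub>1 = a\<^sub>2")
    case True
    then have "u\<^sub>1 = u\<^sub>2" using eq_if_desc_at_max_height[OF assms a\<^sub>1(1)] a\<^sub>1(2) a\<^sub>2(1) h by simp
    then show ?thesis using True leaf_order_refl assms(1) by simp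
  next
    case False
    have "u\<^sub>1 \<in> leaves \<inter> subtree a\<^sub>1" "u\<^sub>2 \<in> leaves \<inter> subtree a\<^sub>2"
      using assms a\<^sub>1 a\<^sub>2 by (simp_all add: mt_subtree_def)
    moreover have "(l\<^sub>1, l\<^sub>2) \<in> R"
      if "(u\<^sub>1, u\<^sub>2) \<in> R" "l\<^sub>1 \<in> leaves \<inter> subtree a\<^sub>1" "l\<^sub>2 \<in> leaves \<inter> subtree a\<^sub>2" for l\<^sub>1 l\<^sub>2
    proof -
      have "l\<^sub>1 \<in> leaves" "desc l\<^sub>1 a\<^sub>1" "l\<^sub>2 \<in> leaves" "desc l\<^sub>2 a\<^sub>2"
        using that(2,3) by (simp_all add: mt_subtree_def)
      then show ?thesis
        using leaf_order_separates_subtrees[OF False _ assms(1) a\<^sub>1(1) a\<^sub>2(1) that(1)] a\<^sub>1(2) a\<^sub>2(2)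
        by simp
    qed
    ultimately show ?thesis using False by blast
  qed
  finally show ?thesis .
qed

end

end

theorem lemma9:
  fixes V :: "'v set" and r :: 'v and parent :: "'v \<Rightarrow> 'v" and fv :: "'v \<Rightarrow> ereal"
    and R :: "('v \<times> ereal) rel"
  assumes "merge_tree V r parent fv"
    and "leaf_order V r parent fv R"
  shows "to_leaf_order V r parent fv (to_layer_order V r parent fv R) = R"
proof -
  interpret merge_tree_struct V r parent fv by unfold_locales (rule assms(1))
  have "to_leaf_order V r parent fv (to_layer_order V r parent fv R) \<subseteq> leaves \<times> leaves"
    by (auto simp: to_leaf_order_def)
  moreover note leaf_order_subset[OF assms(2)]
  ultimately show ?thesis
    using mem_to_leaf_order_to_layer_order_iff[OF assms(2)] by (intro subset_antisym subrelI) blast+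
qed

end
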